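(* Let $q \geq 8$ be a prime power and let $\mathcal{X}$ be a plane curve of degree $q-1$ defined over $\mathbb{F}_q$ without $\mathbb{F}_q$-linear components with $\mathrm{N}_q(\mathcal{X}) = (q-1)^2$. If $Q \in Z(\mathcal{X})$ is a point with $r = \psi_{q-1}(Q) \geq 4$, then $r = q-1$. In particular, $a_0 = 3$.
   Context: $\mathcal{X}(\mathbb{F}_q)=\mathcal{X}\cap\mathbb{P}^2(\mathbb{F}_q)$, $\mathrm{N}_q(\mathcal{X})=\#\mathcal{X}(\mathbb{F}_q)$; "without $\mathbb{F}_q$-linear components" means no line defined over $\mathbb{F}_q$ is a component. $Z(\mathcal{X}) := \mathbb{P}^2(\mathbb{F}_q)\setminus\mathcal{X}(\mathbb{F}_q)$. For a point $P$, $\psi_i(P)$ is the number of $\mathbb{F}_q$-lines $l$ through $P$ with $\#(l\cap\mathcal{X}(\mathbb{F}_q))=i$. $a_0$ is the number of $\mathbb{F}_q$-lines containing no point of $\mathcal{X}(\mathbb{F}_q)$. *)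

theory Defs
  imports "HOL-Computational_Algebra.Polynomial" "HOL-Library.Cardinality"
begin

text \<open>Polynomials in three variables X, Y, Z over a field 'a are represented as
nested univariate polynomials: innermost variable X, middle Y, outermost Z.\<close>

type_synonym 'a poly3 = "'a poly poly poly"

definition varX :: "'a::comm_ring_1 poly3" where
  "varX = [:[:[:0, 1:]:]:]"

definition varY :: "'a::comm_ring_1 poly3" where
  "varY = [:[:0, 1:]:]"

definition varZ :: "'a::comm_ring_1 poly3" where
  "varZ = [:0, 1:]"

definition const3 :: "'a::comm_ring_1 \<Rightarrow> 'a poly3" where
  "const3 c = [:[:[:c:]:]:]"

definition eval3 :: "'a::comm_ring_1 poly3 \<Rightarrow> 'a \<Rightarrow> 'a \<Rightarrow> 'a \<Rightarrow> 'a" where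
  "eval3 F x y z = poly (poly (poly F [:[:z:]:]) [:y:]) x"

definition coeff3 :: "'a::zero poly3 \<Rightarrow> nat \<Rightarrow> nat \<Rightarrow> nat \<Rightarrow> 'a" where
  "coeff3 F i j k = coeff (coeff (coeff F k) j) i"

definition homogeneous3 :: "'a::zero poly3 \<Rightarrow> nat \<Rightarrow> bool" where
  "homogeneous3 F d \<longleftrightarrow> (\<forall>i j k. coeff3 F i j k \<noteq> 0 \<longrightarrow> i + j + k = d)"

definition lin_form :: "'a::comm_ring_1 \<Rightarrow> 'a \<Rightarrow> 'a \<Rightarrow> 'a poly3" where
  "lin_form a b c = const3 a * varX + const3 b * varY + const3 c * varZ"

definition no_linear_components :: "'a::field poly3 \<Rightarrow> bool" where
  "no_linear_components F \<longleftrightarrow>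
     (\<forall>a b c. (a, b, c) \<noteq> (0, 0, 0) \<longrightarrow> \<not> lin_form a b c dvd F)"

definition proj_pt :: "'a::field \<times> 'a \<times> 'a \<Rightarrow> ('a \<times> 'a \<times> 'a) set" where
  "proj_pt v = (case v of (x, y, z) \<Rightarrow> {(l * x, l * y, l * z) | l. l \<noteq> 0})"

definition P2 :: "('a::field \<times> 'a \<times> 'a) set set" where
  "P2 = {proj_pt v | v. v \<noteq> (0, 0, 0)}"

definition proj_line :: "'a::field \<Rightarrow> 'a \<Rightarrow> 'a \<Rightarrow> ('a \<times> 'a \<times> 'a) set set" where
  "proj_line a b c = {P \<in> P2. \<forall>(x, y, z) \<in> P. a * x + b * y + c * z = 0}"

definition lines :: "('a::field \<times> 'a \<times> 'a) set set set" where
  "lines = {proj_line a b c | a b c. (a, b, c) \<noteq> (0, 0, 0)}"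

definition curve_pts :: "'a::field poly3 \<Rightarrow> ('a \<times> 'a \<times> 'a) set set" where
  "curve_pts F = {P \<in> P2. \<forall>(x, y, z) \<in> P. eval3 F x y z = 0}"

definition Zset :: "'a::field poly3 \<Rightarrow> ('a \<times> 'a \<times> 'a) set set" where
  "Zset F = P2 - curve_pts F"

definition psi :: "'a::field poly3 \<Rightarrow> nat \<Rightarrow> ('a \<times> 'a \<times> 'a) set \<Rightarrow> nat" where
  "psi F i P = card {l \<in> lines. P \<in> l \<and> card (l \<inter> curve_pts F) = i}"

definition a0 :: "'a::field poly3 \<Rightarrow> nat" where
  "a0 F = card {l \<in> lines. l \<inter> curve_pts F = {}}"

end

(*
  Let Q = [u] be off the curve X : F = 0, put N = q - 1 and c = F(u) \<noteq> 0. On the line through Q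
  and [p], s \<mapsto> F(s u + p) is a polynomial of degree N with leading coefficient c. Since z^N = 1
  for z \<noteq> 0, a "full" line through Q (one with N points of X) has, after shifting s, the
  restriction c s^N - c. Choose such normalised points R1, R2 on two full lines and index the
  q + 1 lines through Q by the points a R1 + b R2 of the line M they span; the coefficient of s^m
  is then a binary form of degree N - m in (a, b). The one for m = N - 1 vanishes at R1 and R2,
  hence identically, which forces every full line to have restriction c s^N - c. If there are
  r full lines, the forms with N - m < r thus have r zeros and vanish, so each non-full line
  through Q carries at most N - r + 1 points of X. Counting the N^2 points of X on the lines
  through Q gives N^2 \<le> r N + (N + 2 - r)(N + 1 - r), impossible for 4 \<le> r < N when N \<ge> 7.
  For r = N the two other lines through Q miss X, and a line missing X and Q meets every full
  line in its point on M, so it is M: hence a0 = 3.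
*)

theory Submission
  imports Defs
begin

lemma of_nat_card_field_eq_0: "of_nat CARD('a::{finite,field}) = (0::'a)"
proof -
  have "(\<Sum>x\<in>(UNIV::'a set). x) = (\<Sum>x\<in>UNIV. x + 1)"
    by (rule sum.reindex_bij_witness[where i="\<lambda>x. x + 1" and j="\<lambda>x. x - 1"]) auto
  also have "\<dots> = (\<Sum>x\<in>(UNIV::'a set). x) + of_nat CARD('a)"
    by (simp add: sum.distrib)
  finally show ?thesis by simp
qed

lemma power_card_field_minus_1:
  fixes x :: "'a::{finite,field}"
  assumes "x \<noteq> 0"
  shows "x ^ (CARD('a) - 1) = 1"
proof -
  let ?S = "UNIV - {0::'a}"
  have "(\<Prod>y\<in>?S. y) = (\<Prod>y\<in>?S. x * y)"
    by (rule prod.reindex_bij_witness[where i="\<lambda>y. x * y" and j="\<lambda>y. y / x"]) (use assms in auto)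
  also have "\<dots> = x ^ card ?S * (\<Prod>y\<in>?S. y)"
    by (simp add: prod.distrib)
  finally have "x ^ card ?S = 1"
    by (subgoal_tac "(\<Prod>y\<in>?S. y) \<noteq> 0") auto
  moreover have "card ?S = CARD('a) - 1" by (simp add: card_Diff_subset)
  ultimately show ?thesis by simp
qed

lemma poly_altdef_le:
  fixes p :: "'a::comm_ring_1 poly"
  assumes "degree p \<le> n"
  shows "poly p x = (\<Sum>i\<le>n. coeff p i * x ^ i)"
proof -
  have "poly p x = poly (\<Sum>i\<le>n. monom (coeff p i) i) x"
    using poly_as_sum_of_monoms'[OF assms] by simp
  also have "\<dots> = (\<Sum>i\<le>n. coeff p i * x ^ i)"
    by (simp add: poly_sum poly_monom)
  finally show ?thesis .
qed

lemma eval3_add [simp]: "eval3 (A + B) x y z = eval3 A x y z + eval3 B x y z"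
  by (simp add: eval3_def)

lemma eval3_mult [simp]: "eval3 (A * B) x y z = eval3 A x y z * eval3 B x y z"
  by (simp add: eval3_def)

lemma eval3_power [simp]: "eval3 (A ^ n) x y z = eval3 A x y z ^ n"
  by (simp add: eval3_def)

lemma eval3_sum [simp]: "eval3 (sum f S) x y z = (\<Sum>i\<in>S. eval3 (f i) x y z)"
  by (simp add: eval3_def poly_sum)

lemma eval3_const3 [simp]: "eval3 (const3 c) x y z = c"
  by (simp add: eval3_def const3_def)

lemma eval3_lin_form [simp]: "eval3 (lin_form a b c) x y z = a * x + b * y + c * z"
  by (simp add: eval3_def lin_form_def varX_def varY_def varZ_def const3_def algebra_simps)

lemma coeff3_add [simp]: "coeff3 (A + B) i j k = coeff3 A i j k + coeff3 B i j k"
  by (simp add: coeff3_def)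

lemma coeff3_sum: "coeff3 (sum f S) i j k = (\<Sum>x\<in>S. coeff3 (f x) i j k)"
  by (simp add: coeff3_def coeff_sum)

lemma coeff3_mult:
  "coeff3 (A * B) i j k =
     (\<Sum>k1\<le>k. \<Sum>j1\<le>j. \<Sum>i1\<le>i. coeff3 A i1 j1 k1 * coeff3 B (i - i1) (j - j1) (k - k1))"
  by (simp add: coeff3_def coeff_mult coeff_sum)

lemma coeff3_const3: "coeff3 (const3 c) i j k = (if i = 0 \<and> j = 0 \<and> k = 0 then c else 0)"
  by (simp add: coeff3_def const3_def coeff_pCons split: nat.splits)

lemma homogeneous3_coeff3_eq_0:
  "homogeneous3 G N \<Longrightarrow> i + j + k \<noteq> N \<Longrightarrow> coeff3 G i j k = 0"
  unfolding homogeneous3_def by blast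

lemma homogeneous3_mult:
  assumes "homogeneous3 A d" "homogeneous3 B e"
  shows "homogeneous3 (A * B) (d + e)"
  unfolding homogeneous3_def
proof (intro allI impI)
  fix i j k assume "coeff3 (A * B) i j k \<noteq> 0"
  then obtain k1 j1 i1 where le: "k1 \<le> k" "j1 \<le> j" "i1 \<le> i"
    and nz: "coeff3 A i1 j1 k1 * coeff3 B (i - i1) (j - j1) (k - k1) \<noteq> 0"
    unfolding coeff3_mult by (meson atMost_iff sum.not_neutral_contains_not_neutral)
  then have "coeff3 A i1 j1 k1 \<noteq> 0" "coeff3 B (i - i1) (j - j1) (k - k1) \<noteq> 0"
    by auto
  then have "i1 + j1 + k1 = d" "(i - i1) + (j - j1) + (k - k1) = e"
    using assms homogeneous3_coeff3_eq_0 by blast+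
  with le show "i + j + k = d + e" by linarith
qed

lemma homogeneous3_add:
  "homogeneous3 A d \<Longrightarrow> homogeneous3 B d \<Longrightarrow> homogeneous3 (A + B) d"
  unfolding homogeneous3_def by (metis add.right_neutral coeff3_add)

lemma homogeneous3_sum:
  "(\<And>x. x \<in> S \<Longrightarrow> homogeneous3 (f x) d) \<Longrightarrow> homogeneous3 (sum f S) d"
  unfolding homogeneous3_def coeff3_sum by (meson sum.not_neutral_contains_not_neutral)

lemma homogeneous3_const3: "homogeneous3 (const3 c) 0"
  by (simp add: homogeneous3_def coeff3_const3)

lemma homogeneous3_0 [simp]: "homogeneous3 0 d"
  by (simp add: homogeneous3_def coeff3_def)

lemma homogeneous3_power:
  fixes A :: "'a::comm_ring_1 poly3"
  assumes "homogeneous3 A d"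
  shows "homogeneous3 (A ^ n) (n * d)"
proof (induction n)
  case 0
  show ?case using homogeneous3_const3[of "1::'a"] by (simp add: const3_def one_pCons)
next
  case (Suc n)
  then show ?case using homogeneous3_mult[OF assms] by simp
qed

lemma homogeneous3_lin_form: "homogeneous3 (lin_form a b c) 1"
proof -
  have "homogeneous3 (varX :: 'a poly3) 1" "homogeneous3 (varY :: 'a poly3) 1"
    "homogeneous3 (varZ :: 'a poly3) 1"
    by (simp_all add: homogeneous3_def coeff3_def varX_def varY_def varZ_def coeff_pCons
        split: nat.splits)
  then show ?thesis
    unfolding lin_form_def
    by (intro homogeneous3_add) (use homogeneous3_mult[OF homogeneous3_const3] in fastforce)+
qed

lemma homogeneous3_degree_le:
  assumes "homogeneous3 F N"
  shows "degree (coeff (coeff F k) j) \<le> N" "degree (coeff F k) \<le> N" "degree F \<le> N"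
proof -
  have zero: "coeff3 F i j k = 0" if "i > N \<or> j > N \<or> k > N" for i j k
    using homogeneous3_coeff3_eq_0[OF assms] that by fastforce
  show "degree (coeff (coeff F k) j) \<le> N"
    by (rule degree_le) (use zero in \<open>auto simp: coeff3_def\<close>)
  show "degree (coeff F k) \<le> N"
    by (rule degree_le) (use zero in \<open>auto simp: coeff3_def poly_eq_iff\<close>)
  show "degree F \<le> N"
    by (rule degree_le) (use zero in \<open>auto simp: coeff3_def poly_eq_iff\<close>)
qed

lemma eval3_homogeneous:
  assumes "homogeneous3 F N"
  shows "eval3 F x y z = (\<Sum>k\<le>N. \<Sum>j\<le>N. \<Sum>i\<le>N. coeff3 F i j k * x ^ i * y ^ j * z ^ k)"
proof -
  note deg = homogeneous3_degree_le[OF assms]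
  have "eval3 F x y z = (\<Sum>k\<le>N. poly (poly (coeff F k) [:y:]) x * z ^ k)"
    unfolding eval3_def poly_altdef_le[OF deg(3)] by (simp add: poly_sum)
  also have "\<dots> = (\<Sum>k\<le>N. (\<Sum>j\<le>N. poly (coeff (coeff F k) j) x * y ^ j) * z ^ k)"
    unfolding poly_altdef_le[OF deg(2)] by (simp add: poly_sum)
  also have "\<dots> = (\<Sum>k\<le>N. (\<Sum>j\<le>N. (\<Sum>i\<le>N. coeff3 F i j k * x ^ i) * y ^ j) * z ^ k)"
    unfolding poly_altdef_le[OF deg(1)] by (simp add: coeff3_def)
  also have "\<dots> = (\<Sum>k\<le>N. \<Sum>j\<le>N. \<Sum>i\<le>N. coeff3 F i j k * x ^ i * y ^ j * z ^ k)"
    by (simp add: sum_distrib_right)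
  finally show ?thesis .
qed

lemma eval3_homogeneous_scale:
  assumes "homogeneous3 F N"
  shows "eval3 F (l * x) (l * y) (l * z) = l ^ N * eval3 F x y z"
proof -
  have "coeff3 F i j k * (l * x) ^ i * (l * y) ^ j * (l * z) ^ k
      = l ^ N * (coeff3 F i j k * x ^ i * y ^ j * z ^ k)" for i j k
  proof (cases "i + j + k = N")
    case True
    then have "l ^ N = l ^ i * l ^ j * l ^ k" by (metis power_add)
    then show ?thesis by (simp add: power_mult_distrib algebra_simps)
  qed (simp add: homogeneous3_coeff3_eq_0[OF assms])
  then show ?thesis
    unfolding eval3_homogeneous[OF assms] by (simp add: sum_distrib_left)
qed

fun smult3 :: "'a::comm_ring_1 \<Rightarrow> 'a \<times> 'a \<times> 'a \<Rightarrow> 'a \<times> 'a \<times> 'a" where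
  "smult3 l (x, y, z) = (l * x, l * y, l * z)"

fun add3 :: "'a::comm_ring_1 \<times> 'a \<times> 'a \<Rightarrow> 'a \<times> 'a \<times> 'a \<Rightarrow> 'a \<times> 'a \<times> 'a" where
  "add3 (a, b, c) (x, y, z) = (a + x, b + y, c + z)"

fun dot3 :: "'a::comm_ring_1 \<times> 'a \<times> 'a \<Rightarrow> 'a \<times> 'a \<times> 'a \<Rightarrow> 'a" where
  "dot3 (a, b, c) (x, y, z) = a * x + b * y + c * z"

fun cross3 :: "'a::comm_ring_1 \<times> 'a \<times> 'a \<Rightarrow> 'a \<times> 'a \<times> 'a \<Rightarrow> 'a \<times> 'a \<times> 'a" where
  "cross3 (a, b, c) (x, y, z) = (b * z - c * y, c * x - a * z, a * y - b * x)"

fun eval_vec :: "'a::comm_ring_1 poly3 \<Rightarrow> 'a \<times> 'a \<times> 'a \<Rightarrow> 'a" where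
  "eval_vec F (x, y, z) = eval3 F x y z"

definition line_point :: "'a::comm_ring_1 \<Rightarrow> 'a \<times> 'a \<times> 'a \<Rightarrow> 'a \<times> 'a \<times> 'a \<Rightarrow> 'a \<times> 'a \<times> 'a"
  where "line_point s u p = add3 (smult3 s u) p"

lemma line_point_simp [simp]:
  "line_point s (a, b, c) (x, y, z) = (s * a + x, s * b + y, s * c + z)"
  by (simp add: line_point_def)

lemma line_point_0 [simp]: "line_point 0 u p = p"
  by (cases u; cases p) simp

lemma smult3_smult3 [simp]: "smult3 a (smult3 b v) = smult3 (a * b) v"
  by (cases v) (simp add: mult.assoc)

lemma smult3_1 [simp]: "smult3 1 v = v"
  by (cases v) simp

lemma smult3_eq_0_iff: "smult3 (l::'a::field) v = (0, 0, 0) \<longleftrightarrow> l = 0 \<or> v = (0, 0, 0)"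
  by (cases v) auto

lemma dot3_smult3_right [simp]: "dot3 n (smult3 l v) = l * dot3 n v"
  by (cases n; cases v) (simp add: algebra_simps)

lemma dot3_smult3_left [simp]: "dot3 (smult3 l n) v = l * dot3 n v"
  by (cases n; cases v) (simp add: algebra_simps)

lemma dot3_line_point: "dot3 n (line_point s u p) = s * dot3 n u + dot3 n p"
  by (cases n; cases u; cases p) (simp add: algebra_simps)

lemma cross3_smult3_left [simp]: "cross3 (smult3 l u) v = smult3 l (cross3 u v)"
  by (cases u; cases v) (simp add: algebra_simps)

lemma cross3_self [simp]: "cross3 u u = (0, 0, 0)"
  by (cases u) (simp add: algebra_simps)

lemma dot3_cross3_left [simp]: "dot3 (cross3 u v) u = 0"
  by (cases u; cases v) (simp add: algebra_simps)

lemma dot3_cross3_right [simp]: "dot3 (cross3 u v) v = 0"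
  by (cases u; cases v) (simp add: algebra_simps)

lemma dot3_cross3_cyclic: "dot3 (cross3 u v) w = dot3 (cross3 v w) u"
  by (cases u; cases v; cases w) (simp add: algebra_simps)

lemma cross3_line_point: "cross3 u (line_point s u p) = cross3 u p"
  by (cases u; cases p) (simp add: algebra_simps)

lemma cross3_cross3: "cross3 n (cross3 u v) = add3 (smult3 (dot3 n v) u) (smult3 (- dot3 n u) v)"
  by (cases n; cases u; cases v) (simp add: algebra_simps)

lemma cross3_nonzero_D:
  assumes "cross3 u p \<noteq> (0, 0, 0)"
  shows "u \<noteq> (0, 0, 0)" "p \<noteq> (0, 0, 0)"
  using assms by (cases p; cases u; auto)+

lemma cross3_eq_0_imp_parallel:
  fixes u v :: "'a::field \<times> 'a \<times> 'a"
  assumes "cross3 u v = (0, 0, 0)" "u \<noteq> (0, 0, 0)"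
  obtains l where "v = smult3 l u"
proof -
  obtain u1 u2 u3 v1 v2 v3 where uv: "u = (u1, u2, u3)" "v = (v1, v2, v3)"
    by (cases u; cases v) auto
  have e: "u2 * v3 = u3 * v2" "u3 * v1 = u1 * v3" "u1 * v2 = u2 * v1"
    using assms(1) unfolding uv by auto
  consider "u1 \<noteq> 0" | "u1 = 0" "u2 \<noteq> 0" | "u1 = 0" "u2 = 0" "u3 \<noteq> 0"
    using assms(2) uv by auto
  then show ?thesis
  proof cases
    case 1
    then show ?thesis using e by (intro that[of "v1 / u1"]) (auto simp: uv field_simps)
  next
    case 2
    then show ?thesis using e by (intro that[of "v2 / u2"]) (auto simp: uv field_simps)
  next
    case 3
    then show ?thesis using e by (intro that[of "v3 / u3"]) (auto simp: uv field_simps)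
  qed
qed

lemma line_point_nonzero:
  fixes u p :: "'a::field \<times> 'a \<times> 'a"
  assumes "cross3 u p \<noteq> (0, 0, 0)"
  shows "line_point s u p \<noteq> (0, 0, 0)"
  using assms cross3_line_point[of u s p] by (cases u) auto

lemma mem_proj_pt: "w \<in> proj_pt v \<longleftrightarrow> (\<exists>l. l \<noteq> 0 \<and> w = smult3 l v)"
  by (cases v) (auto simp: proj_pt_def)

lemma proj_pt_self: "v \<in> proj_pt (v::'a::field \<times> 'a \<times> 'a)"
  unfolding mem_proj_pt by (rule exI[of _ 1]) simp

lemma proj_pt_eq_iff: "proj_pt v = proj_pt w \<longleftrightarrow> (\<exists>l::'a::field. l \<noteq> 0 \<and> v = smult3 l w)"
proof
  assume "proj_pt v = proj_pt w"
  then show "\<exists>l. l \<noteq> 0 \<and> v = smult3 l w" using proj_pt_self[of v] by (simp add: mem_proj_pt)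
next
  assume "\<exists>l. l \<noteq> 0 \<and> v = smult3 l w"
  then obtain l where l: "l \<noteq> 0" "v = smult3 l w" by blast
  have "(\<exists>m. m \<noteq> 0 \<and> x = smult3 (m * l) w) \<longleftrightarrow> (\<exists>m. m \<noteq> 0 \<and> x = smult3 m w)" for x
  proof
    assume "\<exists>m. m \<noteq> 0 \<and> x = smult3 (m * l) w"
    then show "\<exists>m. m \<noteq> 0 \<and> x = smult3 m w"
      using l(1) by (metis mult_eq_0_iff)
  next
    assume "\<exists>m. m \<noteq> 0 \<and> x = smult3 m w"
    then obtain m where "m \<noteq> 0" "x = smult3 m w" by blast
    then show "\<exists>m. m \<noteq> 0 \<and> x = smult3 (m * l) w"
      using l(1) by (intro exI[of _ "m / l"]) auto
  qed
  then show "proj_pt v = proj_pt w"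
    unfolding set_eq_iff mem_proj_pt l(2) by simp
qed

lemma proj_pt_in_P2: "v \<noteq> (0, 0, 0) \<Longrightarrow> proj_pt v \<in> P2"
  unfolding P2_def by blast

lemma P2E:
  assumes "P \<in> P2"
  obtains v where "v \<noteq> (0, 0, 0)" "P = proj_pt v"
  using assms by (auto simp: P2_def)

lemma proj_pt_eq_iff_cross3:
  fixes u v :: "'a::field \<times> 'a \<times> 'a"
  assumes "u \<noteq> (0, 0, 0)" "v \<noteq> (0, 0, 0)"
  shows "proj_pt u = proj_pt v \<longleftrightarrow> cross3 u v = (0, 0, 0)"
proof
  assume "proj_pt u = proj_pt v"
  then obtain l where "u = smult3 l v" using proj_pt_eq_iff by blast
  then show "cross3 u v = (0, 0, 0)" by (cases v) simp
next
  assume "cross3 u v = (0, 0, 0)"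
  then obtain l where l: "v = smult3 l u" using cross3_eq_0_imp_parallel assms(1) by blast
  then have "l \<noteq> 0" using assms(2) by (auto simp: smult3_eq_0_iff)
  with l have "u = smult3 (1 / l) v" by simp
  with \<open>l \<noteq> 0\<close> show "proj_pt u = proj_pt v"
    unfolding proj_pt_eq_iff by (intro exI[of _ "1 / l"]) simp
qed

lemma ball_proj_pt_iff:
  assumes "\<And>l w. l \<noteq> 0 \<Longrightarrow> P (smult3 l w) \<longleftrightarrow> P w"
  shows "(\<forall>w\<in>proj_pt v. P w) \<longleftrightarrow> P (v::'a::field \<times> 'a \<times> 'a)"
proof
  assume "P v"
  show "\<forall>w\<in>proj_pt v. P w"
  proof
    fix w assume "w \<in> proj_pt v"
    then obtain l where "l \<noteq> 0" "w = smult3 l v" by (auto simp: mem_proj_pt)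
    then show "P w" using assms \<open>P v\<close> by metis
  qed
qed (use proj_pt_self in blast)

lemma eval_vec_smult3:
  assumes "homogeneous3 F N"
  shows "eval_vec F (smult3 l v) = l ^ N * eval_vec F v"
  by (cases v) (simp add: eval3_homogeneous_scale[OF assms])

lemma proj_pt_in_curve_pts_iff:
  fixes F :: "'a::field poly3"
  assumes "homogeneous3 F N" "v \<noteq> (0, 0, 0)"
  shows "proj_pt v \<in> curve_pts F \<longleftrightarrow> eval_vec F v = 0"
proof -
  have "(\<forall>(x, y, z)\<in>proj_pt v. eval3 F x y z = 0) \<longleftrightarrow> (\<forall>w\<in>proj_pt v. eval_vec F w = 0)"
    by auto
  also have "\<dots> \<longleftrightarrow> eval_vec F v = 0"
    by (rule ball_proj_pt_iff) (simp add: eval_vec_smult3[OF assms(1)])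
  finally show ?thesis
    unfolding curve_pts_def using proj_pt_in_P2[OF assms(2)] by auto
qed

fun line_of :: "'a::field \<times> 'a \<times> 'a \<Rightarrow> ('a \<times> 'a \<times> 'a) set set" where
  "line_of (a, b, c) = proj_line a b c"

lemma proj_pt_in_line_of_iff:
  assumes "v \<noteq> (0, 0, 0)"
  shows "proj_pt v \<in> line_of n \<longleftrightarrow> dot3 n v = 0"
proof -
  obtain a b c where n: "n = (a, b, c)" by (cases n)
  have "(\<forall>(x, y, z)\<in>proj_pt v. a * x + b * y + c * z = 0) \<longleftrightarrow> (\<forall>w\<in>proj_pt v. dot3 n w = 0)"
    unfolding n by auto
  also have "\<dots> \<longleftrightarrow> dot3 n v = 0"
    by (rule ball_proj_pt_iff) simp
  finally show ?thesis
    unfolding n line_of.simps proj_line_def using proj_pt_in_P2[OF assms] by (auto simp: n)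
qed

lemma line_of_subset_P2: "line_of n \<subseteq> P2"
  by (cases n) (auto simp: proj_line_def)

lemma lines_eq_line_of: "lines = {line_of n | n. n \<noteq> (0, 0, 0)}"
  unfolding lines_def by force

lemma line_of_in_lines: "n \<noteq> (0, 0, 0) \<Longrightarrow> line_of n \<in> lines"
  using lines_eq_line_of by blast

lemma linesE:
  assumes "l \<in> lines"
  obtains n where "n \<noteq> (0, 0, 0)" "l = line_of n"
  using assms lines_eq_line_of by blast

lemma line_of_eqI:
  assumes "\<And>v. v \<noteq> (0, 0, 0) \<Longrightarrow> dot3 n v = 0 \<longleftrightarrow> dot3 n' v = 0"
  shows "line_of n = line_of n'"
proof (rule set_eqI)
  fix P
  show "P \<in> line_of n \<longleftrightarrow> P \<in> line_of n'"
  proof (cases "P \<in> P2")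
    case True
    then obtain v where "v \<noteq> (0, 0, 0)" "P = proj_pt v" by (rule P2E)
    then show ?thesis using proj_pt_in_line_of_iff assms by metis
  qed (use line_of_subset_P2 in blast)
qed

lemma line_of_smult3: "l \<noteq> 0 \<Longrightarrow> line_of (smult3 (l::'a::field) n) = line_of n"
  by (rule line_of_eqI) simp

lemma line_of_eq_cross3:
  fixes u v n :: "'a::field \<times> 'a \<times> 'a"
  assumes "cross3 u v \<noteq> (0, 0, 0)" "n \<noteq> (0, 0, 0)" "dot3 n u = 0" "dot3 n v = 0"
  shows "line_of n = line_of (cross3 u v)"
proof -
  have "cross3 n (cross3 u v) = (0, 0, 0)"
    unfolding cross3_cross3 assms by (cases u; cases v) simp
  then obtain l where l: "cross3 u v = smult3 l n"
    using cross3_eq_0_imp_parallel assms(2) by blast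
  then have "l \<noteq> 0" using assms(1) by (auto simp: smult3_eq_0_iff)
  with l show ?thesis by (simp add: line_of_smult3)
qed

lemma lines_eq_if_two_common_points:
  fixes a b :: "'a::field \<times> 'a \<times> 'a"
  assumes "l1 \<in> lines" "l2 \<in> lines"
    and "proj_pt a \<in> l1" "proj_pt a \<in> l2" "proj_pt b \<in> l1" "proj_pt b \<in> l2"
    and "a \<noteq> (0, 0, 0)" "b \<noteq> (0, 0, 0)" "proj_pt a \<noteq> proj_pt b"
  shows "l1 = l2"
proof -
  obtain n1 n2 where n: "n1 \<noteq> (0, 0, 0)" "l1 = line_of n1" "n2 \<noteq> (0, 0, 0)" "l2 = line_of n2"
    using assms(1,2) by (metis linesE)
  have "cross3 a b \<noteq> (0, 0, 0)" using proj_pt_eq_iff_cross3 assms(7-9) by blast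
  moreover have "dot3 n1 a = 0" "dot3 n1 b = 0" "dot3 n2 a = 0" "dot3 n2 b = 0"
    using proj_pt_in_line_of_iff assms(3-8) n by blast+
  ultimately show ?thesis using line_of_eq_cross3 n by metis
qed

lemma lines_intersect:
  fixes n n' :: "'a::field \<times> 'a \<times> 'a"
  assumes "n \<noteq> (0, 0, 0)" "n' \<noteq> (0, 0, 0)" "line_of n \<noteq> line_of n'"
  obtains P where "P \<in> line_of n" "P \<in> line_of n'"
proof (cases "cross3 n n' = (0, 0, 0)")
  case True
  then obtain l where l: "n' = smult3 l n" using cross3_eq_0_imp_parallel assms(1) by blast
  then have "l \<noteq> 0" using assms(2) by (auto simp: smult3_eq_0_iff)
  then have "line_of n' = line_of n" using l by (simp add: line_of_smult3)
  with assms(3) show ?thesis by simp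
next
  case False
  have "dot3 n (cross3 n n') = 0" "dot3 n' (cross3 n n') = 0"
    by (cases n; cases n'; simp add: algebra_simps)+
  then show ?thesis using proj_pt_in_line_of_iff[OF False] that by blast
qed

lemma proj_pt_on_line_cases:
  fixes u p w :: "'a::field \<times> 'a \<times> 'a"
  assumes "cross3 u p \<noteq> (0, 0, 0)" "w \<noteq> (0, 0, 0)" "dot3 (cross3 u p) w = 0"
  shows "proj_pt w = proj_pt u \<or> (\<exists>s. proj_pt w = proj_pt (line_point s u p))"
proof (cases "cross3 u w = (0, 0, 0)")
  case True
  then show ?thesis using proj_pt_eq_iff_cross3 cross3_nonzero_D(1)[OF assms(1)] assms(2) by metis
next
  case False
  have "cross3 (cross3 u p) (cross3 u w) = smult3 (dot3 (cross3 u p) w) u"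
    by (cases u; cases p; cases w) (simp add: algebra_simps)
  then have "cross3 (cross3 u p) (cross3 u w) = (0, 0, 0)"
    using assms(3) by (cases u) simp
  then obtain l where l: "cross3 u w = smult3 l (cross3 u p)"
    using cross3_eq_0_imp_parallel assms(1) by blast
  then have "l \<noteq> 0" using False by (auto simp: smult3_eq_0_iff)
  have "cross3 u (add3 w (smult3 (- l) p)) = (0, 0, 0)"
    using l by (cases u; cases w; cases p) (simp add: algebra_simps)
  then obtain m where m: "add3 w (smult3 (- l) p) = smult3 m u"
    using cross3_eq_0_imp_parallel cross3_nonzero_D(1)[OF assms(1)] by blast
  have "w = smult3 l (line_point (m / l) u p)"
    using m \<open>l \<noteq> 0\<close> by (cases u; cases w; cases p) (auto simp: field_simps)
  then show ?thesis using \<open>l \<noteq> 0\<close> proj_pt_eq_iff by blast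
qed

lemma line_of_cross3_eq:
  fixes u p :: "'a::field \<times> 'a \<times> 'a"
  assumes "cross3 u p \<noteq> (0, 0, 0)"
  shows "line_of (cross3 u p) = insert (proj_pt u) (range (\<lambda>s. proj_pt (line_point s u p)))"
proof (intro equalityI subsetI)
  fix P assume P: "P \<in> line_of (cross3 u p)"
  then obtain w where w: "w \<noteq> (0, 0, 0)" "P = proj_pt w"
    using line_of_subset_P2 by (blast elim: P2E)
  then have "dot3 (cross3 u p) w = 0" using P proj_pt_in_line_of_iff by blast
  then show "P \<in> insert (proj_pt u) (range (\<lambda>s. proj_pt (line_point s u p)))"
    using proj_pt_on_line_cases[OF assms w(1)] w(2) by auto
next
  fix P assume "P \<in> insert (proj_pt u) (range (\<lambda>s. proj_pt (line_point s u p)))"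
  then show "P \<in> line_of (cross3 u p)"
    using proj_pt_in_line_of_iff[OF cross3_nonzero_D(1)[OF assms], where n = "cross3 u p"]
      proj_pt_in_line_of_iff[OF line_point_nonzero[OF assms], where n = "cross3 u p"]
    by (auto simp: dot3_line_point)
qed

lemma inj_proj_line_point:
  fixes u p :: "'a::field \<times> 'a \<times> 'a"
  assumes "cross3 u p \<noteq> (0, 0, 0)"
  shows "inj (\<lambda>s. proj_pt (line_point s u p))"
proof (rule injI)
  fix s t assume "proj_pt (line_point s u p) = proj_pt (line_point t u p)"
  then have "cross3 (line_point s u p) (line_point t u p) = (0, 0, 0)"
    using proj_pt_eq_iff_cross3 line_point_nonzero[OF assms] by blast
  then have "smult3 (t - s) (cross3 u p) = (0, 0, 0)"
    by (cases u; cases p) (simp add: algebra_simps)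
  then show "s = t" using assms by (simp add: smult3_eq_0_iff)
qed

lemma proj_pt_notin_line_points:
  fixes u p :: "'a::field \<times> 'a \<times> 'a"
  assumes "cross3 u p \<noteq> (0, 0, 0)"
  shows "proj_pt u \<noteq> proj_pt (line_point s u p)"
  using proj_pt_eq_iff_cross3[OF cross3_nonzero_D(1)[OF assms] line_point_nonzero[OF assms]]
    assms cross3_line_point by metis

section \<open>Restricting a form to lines\<close>

fun linear_subst ::
  "'a::comm_ring_1 poly3 \<Rightarrow> nat \<Rightarrow> 'a \<times> 'a \<times> 'a \<Rightarrow> 'a \<times> 'a \<times> 'a \<Rightarrow> 'a \<times> 'a \<times> 'a \<Rightarrow> 'a poly3"
where
  "linear_subst F N (u1, u2, u3) (v1, v2, v3) (w1, w2, w3) =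
     (\<Sum>k\<le>N. \<Sum>j\<le>N. \<Sum>i\<le>N. const3 (coeff3 F i j k)
        * lin_form u1 v1 w1 ^ i * lin_form u2 v2 w2 ^ j * lin_form u3 v3 w3 ^ k)"

lemma eval3_linear_subst:
  assumes "homogeneous3 F N"
  shows "eval3 (linear_subst F N u v w) s a b
    = eval_vec F (add3 (add3 (smult3 s u) (smult3 a v)) (smult3 b w))"
  by (cases u; cases v; cases w) (simp add: eval3_homogeneous[OF assms] algebra_simps)

lemma homogeneous3_linear_subst:
  assumes "homogeneous3 F N"
  shows "homogeneous3 (linear_subst F N u v w) N"
proof -
  have summand: "homogeneous3 (const3 (coeff3 F i j k) * A ^ i * B ^ j * C ^ k) N"
    if "homogeneous3 A 1" "homogeneous3 B 1" "homogeneous3 C 1" for i j k and A B C :: "'a poly3"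
  proof (cases "i + j + k = N")
    case True
    then have "N = 0 + i * 1 + j * 1 + k * 1" by simp
    then show ?thesis
      by (metis homogeneous3_mult homogeneous3_power homogeneous3_const3 that)
  qed (simp add: homogeneous3_coeff3_eq_0[OF assms] const3_def)
  show ?thesis
    by (cases u; cases v; cases w) (simp, intro homogeneous3_sum summand homogeneous3_lin_form)
qed

text \<open>For \<open>G\<close> homogeneous of degree \<open>N\<close>, \<open>polyX G N a b\<close> is \<open>G(X, a, b)\<close> as a polynomial
  in \<open>X\<close> and \<open>coeffX G N m a b\<close> is its coefficient of \<open>X\<^sup>m\<close>. The latter is a binary form of
  degree \<open>N - m\<close> in \<open>(a, b)\<close>, whose dehomogenisation \<open>t \<mapsto> coeffX G N m t 1\<close> is
  \<open>coeffX_dehom G N m\<close>.\<close>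

definition coeffX :: "'a::comm_ring_1 poly3 \<Rightarrow> nat \<Rightarrow> nat \<Rightarrow> 'a \<Rightarrow> 'a \<Rightarrow> 'a" where
  "coeffX G N m a b = (\<Sum>j\<le>N. \<Sum>k\<le>N. coeff3 G m j k * a ^ j * b ^ k)"

definition polyX :: "'a::comm_ring_1 poly3 \<Rightarrow> nat \<Rightarrow> 'a \<Rightarrow> 'a \<Rightarrow> 'a poly" where
  "polyX G N a b = (\<Sum>m\<le>N. monom (coeffX G N m a b) m)"

definition coeffX_dehom :: "'a::comm_ring_1 poly3 \<Rightarrow> nat \<Rightarrow> nat \<Rightarrow> 'a poly" where
  "coeffX_dehom G N m = (\<Sum>j\<le>N. monom (coeff3 G m j (N - m - j)) j)"

lemma homogeneous3_coeff3_eq_if: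
  assumes "homogeneous3 G N"
  shows "coeff3 G m j k = (if k = N - m - j then coeff3 G m j (N - m - j) else 0)"
  using homogeneous3_coeff3_eq_0[OF assms, of m j k] by (cases "m + j + k = N") auto

lemma poly_polyX:
  assumes "homogeneous3 G N"
  shows "poly (polyX G N a b) s = eval3 G s a b"
proof -
  have "poly (polyX G N a b) s = (\<Sum>i\<le>N. \<Sum>j\<le>N. \<Sum>k\<le>N. coeff3 G i j k * s ^ i * a ^ j * b ^ k)"
    unfolding polyX_def coeffX_def
    by (simp add: poly_sum poly_monom sum_distrib_left sum_distrib_right mult_ac)
  also have "\<dots> = (\<Sum>i\<le>N. \<Sum>k\<le>N. \<Sum>j\<le>N. coeff3 G i j k * s ^ i * a ^ j * b ^ k)"
    by (intro sum.cong refl sum.swap)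
  also have "\<dots> = (\<Sum>k\<le>N. \<Sum>i\<le>N. \<Sum>j\<le>N. coeff3 G i j k * s ^ i * a ^ j * b ^ k)"
    by (rule sum.swap)
  also have "\<dots> = eval3 G s a b"
    unfolding eval3_homogeneous[OF assms] by (intro sum.cong refl sum.swap)
  finally show ?thesis .
qed

lemma coeff_polyX: "coeff (polyX G N a b) m = (if m \<le> N then coeffX G N m a b else 0)"
  unfolding polyX_def by (simp add: coeff_sum)

lemma degree_polyX: "degree (polyX G N a b) \<le> N"
  by (rule degree_le) (simp add: coeff_polyX)

lemma coeffX_top:
  assumes "homogeneous3 G N"
  shows "coeffX G N N a b = eval3 G 1 0 0"
proof -
  have "coeff3 G N j k * a ^ j * b ^ k = (if k = 0 then if j = 0 then coeff3 G N 0 0 else 0 else 0)"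
    for j k
    by (cases "j = 0 \<and> k = 0") (auto simp: homogeneous3_coeff3_eq_0[OF assms] power_0_left)
  then have "coeffX G N N a b = coeff3 G N 0 0"
    unfolding coeffX_def by simp
  moreover have "coeff3 G i j k * 1 ^ i * 0 ^ j * 0 ^ k
      = (if i = N then if j = 0 then if k = 0 then coeff3 G N 0 0 else 0 else 0 else 0)" for i j k
    by (cases "i = N \<and> j = 0 \<and> k = 0") (auto simp: homogeneous3_coeff3_eq_0[OF assms] power_0_left)
  then have "eval3 G 1 0 0 = coeff3 G N 0 0"
    unfolding eval3_homogeneous[OF assms] by simp
  ultimately show ?thesis by simp
qed

lemma coeff_coeffX_dehom:
  "coeff (coeffX_dehom G N m) j = (if j \<le> N then coeff3 G m j (N - m - j) else 0)"
  unfolding coeffX_dehom_def by (simp add: coeff_sum)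

lemma degree_coeffX_dehom:
  assumes "homogeneous3 G N"
  shows "degree (coeffX_dehom G N m) \<le> N - m"
  by (rule degree_le)
    (auto simp: coeff_coeffX_dehom homogeneous3_coeff3_eq_0[OF assms])

lemma poly_coeffX_dehom:
  assumes "homogeneous3 G N"
  shows "poly (coeffX_dehom G N m) t = coeffX G N m t 1"
proof -
  have "(\<Sum>k\<le>N. coeff3 G m j k * t ^ j * 1 ^ k)
      = (\<Sum>k\<le>N. if k = N - m - j then coeff3 G m j (N - m - j) * t ^ j else 0)" for j
    by (rule sum.cong[OF refl]) (subst homogeneous3_coeff3_eq_if[OF assms], simp)
  then show ?thesis
    unfolding coeffX_dehom_def coeffX_def by (simp add: poly_sum poly_monom)
qed

lemma coeffX_eq_0_if_dehom_eq_0: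
  assumes "homogeneous3 G N" "coeffX_dehom G N m = 0"
  shows "coeffX G N m a b = 0"
proof -
  have "coeff3 G m j k = 0" if "j \<le> N" for j k
    using homogeneous3_coeff3_eq_if[OF assms(1), of m j k] that
      arg_cong[OF assms(2), of "\<lambda>p. coeff p j"]
    by (simp add: coeff_coeffX_dehom)
  then show ?thesis unfolding coeffX_def by simp
qed

lemma coeffX_1_0:
  assumes "homogeneous3 G N" "m \<le> N"
  shows "coeffX G N m 1 0 = coeff (coeffX_dehom G N m) (N - m)"
proof -
  have "coeff3 G m j k * 1 ^ j * 0 ^ k
      = (if k = 0 then if j = N - m then coeff3 G m (N - m) 0 else 0 else 0)"
    for j k
    using assms(2)
    by (cases "k = 0 \<and> j = N - m") (auto simp: homogeneous3_coeff3_eq_0[OF assms(1)] power_0_left)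
  then show ?thesis
    unfolding coeffX_def coeff_coeffX_dehom using assms(2) by simp
qed

lemma coeffX_0_1:
  assumes "homogeneous3 G N" "m \<le> N"
  shows "coeffX G N m 0 1 = coeff (coeffX_dehom G N m) 0"
proof -
  have "coeff3 G m j k * 0 ^ j * 1 ^ k
      = (if k = N - m then if j = 0 then coeff3 G m 0 (N - m) else 0 else 0)"
    for j k
    using assms(2)
    by (cases "j = 0 \<and> k = N - m") (auto simp: homogeneous3_coeff3_eq_0[OF assms(1)] power_0_left)
  then show ?thesis
    unfolding coeffX_def coeff_coeffX_dehom using assms(2) by simp
qed

section \<open>The pencil of lines through a point off the curve\<close>

locale off_curve_point =
  fixes F :: "'a::{finite,field} poly3" and N :: nat and u :: "'a \<times> 'a \<times> 'a"
  assumes homogeneous: "homogeneous3 F N"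
    and card_field: "CARD('a) = N + 1"
    and u_nonzero: "u \<noteq> (0, 0, 0)"
    and eval_u_nonzero: "eval_vec F u \<noteq> 0"
begin

abbreviation "X \<equiv> curve_pts F"
abbreviation "Q \<equiv> proj_pt u"
abbreviation "c \<equiv> eval_vec F u"

definition line_poly :: "'a \<times> 'a \<times> 'a \<Rightarrow> 'a poly" where
  "line_poly p = polyX (linear_subst F N u p (0, 0, 0)) N 1 0"

definition nroots :: "'a \<times> 'a \<times> 'a \<Rightarrow> nat" where
  "nroots p = card {s. poly (line_poly p) s = 0}"

definition line_Q :: "'a \<times> 'a \<times> 'a \<Rightarrow> ('a \<times> 'a \<times> 'a) set set" where
  "line_Q p = line_of (cross3 u p)"

lemma N_ge_1: "N \<ge> 1"
proof -
  have "card {0, 1::'a} \<le> CARD('a)" by (rule card_mono) auto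
  then show ?thesis using card_field by simp
qed

lemma power_N_eq_1: "(z::'a) \<noteq> 0 \<Longrightarrow> z ^ N = 1"
  using power_card_field_minus_1[of z] card_field by simp

lemma of_nat_N: "(of_nat N :: 'a) = - 1"
  using of_nat_card_field_eq_0[where 'a = 'a] card_field
  by (simp add: eq_neg_iff_add_eq_0 add.commute)

lemma poly_line_poly: "poly (line_poly p) s = eval_vec F (line_point s u p)"
  unfolding line_poly_def poly_polyX[OF homogeneous3_linear_subst[OF homogeneous]]
    eval3_linear_subst[OF homogeneous]
  by (cases u; cases p) simp

lemma poly_line_poly_shift: "poly (line_poly (line_point s0 u p)) s = poly (line_poly p) (s + s0)"
  unfolding poly_line_poly by (cases u; cases p) (simp add: algebra_simps)

lemma degree_line_poly: "degree (line_poly p) \<le> N"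
  unfolding line_poly_def by (rule degree_polyX)

lemma coeff_line_poly_N: "coeff (line_poly p) N = c"
proof -
  have "coeff (line_poly p) N = eval3 (linear_subst F N u p (0, 0, 0)) 1 0 0"
    unfolding line_poly_def coeff_polyX
    using coeffX_top[OF homogeneous3_linear_subst[OF homogeneous]] by simp
  also have "\<dots> = c"
    unfolding eval3_linear_subst[OF homogeneous] by (cases u; cases p) simp
  finally show ?thesis .
qed

lemma line_poly_nonzero: "line_poly p \<noteq> 0"
  using coeff_line_poly_N[of p] eval_u_nonzero by auto

lemma nroots_le: "nroots p \<le> N"
  unfolding nroots_def
  using card_poly_roots_bound[OF line_poly_nonzero, of p] degree_line_poly[of p] by linarith

lemma Q_notin_X: "Q \<notin> X"
  using proj_pt_in_curve_pts_iff[OF homogeneous u_nonzero] eval_u_nonzero by simp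

lemma Q_in_line_Q: "Q \<in> line_Q p"
  unfolding line_Q_def using proj_pt_in_line_of_iff[OF u_nonzero] by simp

lemma proj_pt_in_line_Q: "p \<noteq> (0, 0, 0) \<Longrightarrow> proj_pt p \<in> line_Q p"
  unfolding line_Q_def by (simp add: proj_pt_in_line_of_iff)

lemma line_Q_in_lines: "cross3 u p \<noteq> (0, 0, 0) \<Longrightarrow> line_Q p \<in> lines"
  unfolding line_Q_def by (rule line_of_in_lines)

lemma cross3_u_nonzero: "p \<noteq> (0, 0, 0) \<Longrightarrow> proj_pt p \<noteq> Q \<Longrightarrow> cross3 u p \<noteq> (0, 0, 0)"
  using proj_pt_eq_iff_cross3[OF u_nonzero] by metis

lemma line_through_Q_eq_line_Q:
  assumes "l \<in> lines" "Q \<in> l" "proj_pt p \<in> l" "proj_pt p \<noteq> Q" "p \<noteq> (0, 0, 0)"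
  shows "l = line_Q p"
proof -
  obtain n where n: "n \<noteq> (0, 0, 0)" "l = line_of n" using assms(1) by (rule linesE)
  have "dot3 n u = 0" "dot3 n p = 0"
    using proj_pt_in_line_of_iff u_nonzero assms(2,3,5) n(2) by blast+
  then show ?thesis
    unfolding line_Q_def n(2)
    using line_of_eq_cross3[OF cross3_u_nonzero[OF assms(5,4)] n(1)] by blast
qed

lemma line_Q_inter_X:
  assumes "cross3 u p \<noteq> (0, 0, 0)"
  shows "line_Q p \<inter> X = (\<lambda>s. proj_pt (line_point s u p)) ` {s. poly (line_poly p) s = 0}"
  unfolding line_Q_def line_of_cross3_eq[OF assms] poly_line_poly
  using Q_notin_X proj_pt_in_curve_pts_iff[OF homogeneous line_point_nonzero[OF assms]] by auto

lemma card_line_Q_inter_X: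
  assumes "cross3 u p \<noteq> (0, 0, 0)"
  shows "card (line_Q p \<inter> X) = nroots p"
  unfolding line_Q_inter_X[OF assms] nroots_def
  by (rule card_image, rule inj_on_subset[OF inj_proj_line_point[OF assms]]) simp

lemma full_line_unique_nonroot:
  assumes "nroots p = N"
  obtains s0 where "\<And>s. poly (line_poly p) s = 0 \<longleftrightarrow> s \<noteq> s0"
proof -
  let ?S = "{s. poly (line_poly p) s = 0}"
  have "card (UNIV - ?S) = 1"
    using assms card_field unfolding nroots_def by (simp add: card_Diff_subset)
  then obtain s0 where "UNIV - ?S = {s0}" by (rule card_1_singletonE)
  then show ?thesis using that by blast
qed

lemma line_poly_eq_if_unique_nonroot:
  assumes "\<And>s. poly (line_poly p) s = 0 \<longleftrightarrow> s \<noteq> s0"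
  shows "line_poly p = smult c ([:-s0, 1:] ^ N) - [:c:]"
proof (rule poly_eqI_degree_lead_coeff[where n = N and A = "UNIV - {s0}"])
  show "coeff (line_poly p) N = coeff (smult c ([:-s0, 1:] ^ N) - [:c:]) N"
    using coeff_line_poly_N N_ge_1 by (simp add: coeff_linear_power coeff_pCons split: nat.split)
  show "N \<le> card (UNIV - {s0})" using card_field by (simp add: card_Diff_subset)
  show "degree (line_poly p) \<le> N" by (rule degree_line_poly)
  have "degree (smult c ([:-s0, 1:] ^ N)) \<le> N"
    by (rule order.trans[OF degree_smult_le]) (simp add: degree_power_eq)
  then show "degree (smult c ([:-s0, 1:] ^ N) - [:c:]) \<le> N"
    by (intro order.trans[OF degree_diff_le_max]) simp
  fix z :: 'a assume "z \<in> UNIV - {s0}"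
  then have "(z - s0) ^ N = 1" by (intro power_N_eq_1) simp
  then show "poly (line_poly p) z = poly (smult c ([:-s0, 1:] ^ N) - [:c:]) z"
    using assms[of z] \<open>z \<in> UNIV - {s0}\<close> by simp
qed

lemma line_poly_eq_if_nonroot_0:
  assumes "\<And>s. poly (line_poly p) s = 0 \<longleftrightarrow> s \<noteq> 0"
  shows "line_poly p = monom c N - [:c:]"
  using line_poly_eq_if_unique_nonroot[OF assms] by (simp add: monom_altdef)

lemma unique_nonroot_eq_0:
  assumes "N \<ge> 2"
    and nonroot: "\<And>s. poly (line_poly p) s = 0 \<longleftrightarrow> s \<noteq> s0"
    and coeff: "coeff (line_poly p) (N - 1) = 0"
  shows "s0 = 0"
proof -
  have "N choose (N - 1) = N" using binomial_symmetric[of "N - 1" N] assms(1) by simp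
  then have "coeff ([:-s0, 1:] ^ N) (N - 1) = of_nat N * (- s0)"
    using assms(1) by (subst coeff_linear_poly_power) auto
  moreover have "coeff [:c:] (N - 1) = 0" using assms(1) by (cases "N - 1") auto
  ultimately have "coeff (line_poly p) (N - 1) = c * s0"
    using assms(1) unfolding line_poly_eq_if_unique_nonroot[OF nonroot] by (simp add: of_nat_N)
  then show "s0 = 0" using coeff eval_u_nonzero by simp
qed

lemma exists_normalized_point:
  assumes "l \<in> lines" "Q \<in> l" "card (l \<inter> X) = N"
  obtains R where "cross3 u R \<noteq> (0, 0, 0)" "line_Q R = l"
    "\<And>s. poly (line_poly R) s = 0 \<longleftrightarrow> s \<noteq> 0"
proof -
  have "l \<inter> X \<noteq> {}" using assms(3) N_ge_1 by auto
  then obtain T where T: "T \<in> l" "T \<in> X" by blast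
  then obtain p where p: "p \<noteq> (0, 0, 0)" "T = proj_pt p"
    unfolding curve_pts_def by (blast elim: P2E)
  have "T \<noteq> Q" using T Q_notin_X by blast
  then have cross: "cross3 u p \<noteq> (0, 0, 0)" and l: "l = line_Q p"
    using cross3_u_nonzero line_through_Q_eq_line_Q assms(1,2) T(1) p by auto
  then have "nroots p = N" using card_line_Q_inter_X assms(3) by simp
  then obtain s0 where s0: "\<And>s. poly (line_poly p) s = 0 \<longleftrightarrow> s \<noteq> s0"
    using full_line_unique_nonroot by blast
  show ?thesis
  proof
    show "cross3 u (line_point s0 u p) \<noteq> (0, 0, 0)" using cross by (simp add: cross3_line_point)
    show "line_Q (line_point s0 u p) = l" using l by (simp add: line_Q_def cross3_line_point)
    show "poly (line_poly (line_point s0 u p)) s = 0 \<longleftrightarrow> s \<noteq> 0" for s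
      unfolding poly_line_poly_shift s0 by simp
  qed
qed

end

section \<open>Two full lines through the point\<close>

text \<open>\<open>'a option\<close> models the projective line over \<open>'a\<close>, with \<open>None\<close> the point at infinity.\<close>

fun P1_coords :: "'a::comm_ring_1 option \<Rightarrow> 'a \<times> 'a" where
  "P1_coords None = (1, 0)"
| "P1_coords (Some t) = (t, 1)"

locale full_line_frame = off_curve_point +
  fixes R1 R2 :: "'a \<times> 'a \<times> 'a"
  assumes N_ge_2: "N \<ge> 2"
    and R1_normal: "\<And>s. poly (line_poly R1) s = 0 \<longleftrightarrow> s \<noteq> 0"
    and R2_normal: "\<And>s. poly (line_poly R2) s = 0 \<longleftrightarrow> s \<noteq> 0"
    and independent: "dot3 (cross3 R1 R2) u \<noteq> 0"
begin

abbreviation "G \<equiv> linear_subst F N u R1 R2"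
abbreviation "M \<equiv> line_of (cross3 R1 R2)"

definition M_point :: "'a option \<Rightarrow> 'a \<times> 'a \<times> 'a" where
  "M_point d = (case P1_coords d of (a, b) \<Rightarrow> add3 (smult3 a R1) (smult3 b R2))"

definition full :: "'a option set" where
  "full = {d. nroots (M_point d) = N}"

lemma M_point_None: "M_point None = R1"
  unfolding M_point_def by (cases R1; cases R2) simp

lemma M_point_Some: "M_point (Some t) = line_point t R1 R2"
  unfolding M_point_def by (cases R1; cases R2) simp

lemma cross3_R1_R2: "cross3 R1 R2 \<noteq> (0, 0, 0)"
  using independent by (cases u) auto

lemma M_point_nonzero: "M_point d \<noteq> (0, 0, 0)"
  using cross3_nonzero_D(1)[OF cross3_R1_R2] line_point_nonzero[OF cross3_R1_R2]
  by (cases d) (simp_all add: M_point_None M_point_Some)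

lemma M_eq_range: "M = range (\<lambda>d. proj_pt (M_point d))"
proof -
  have "range (\<lambda>d. proj_pt (M_point d))
      = insert (proj_pt R1) (range (\<lambda>t. proj_pt (line_point t R1 R2)))"
    by (simp add: UNIV_option_conv image_image M_point_None M_point_Some)
  then show ?thesis using line_of_cross3_eq[OF cross3_R1_R2] by simp
qed

lemma inj_proj_M_point: "inj (\<lambda>d. proj_pt (M_point d))"
proof (rule injI)
  fix d1 d2 assume eq: "proj_pt (M_point d1) = proj_pt (M_point d2)"
  note not_R1 = proj_pt_notin_line_points[OF cross3_R1_R2]
  note inj = inj_proj_line_point[OF cross3_R1_R2, THEN injD]
  show "d1 = d2"
    using eq not_R1 not_R1[symmetric] inj
    by (cases d1; cases d2) (simp_all add: M_point_None M_point_Some)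
qed

lemma Q_notin_M: "Q \<notin> M"
  using proj_pt_in_line_of_iff[OF u_nonzero] independent by blast

lemma proj_M_point_in_M: "proj_pt (M_point d) \<in> M"
  using M_eq_range by blast

lemma proj_M_point_neq_Q: "proj_pt (M_point d) \<noteq> Q"
  using proj_M_point_in_M Q_notin_M by metis

lemma cross3_u_M_point: "cross3 u (M_point d) \<noteq> (0, 0, 0)"
  by (rule cross3_u_nonzero[OF M_point_nonzero proj_M_point_neq_Q])

lemma line_Q_M_point_in_lines: "line_Q (M_point d) \<in> lines"
  by (rule line_Q_in_lines[OF cross3_u_M_point])

lemma inj_line_Q_M_point: "inj (\<lambda>d. line_Q (M_point d))"
proof (rule injI, rule ccontr)
  fix d1 d2 assume eq: "line_Q (M_point d1) = line_Q (M_point d2)" and "d1 \<noteq> d2"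
  then have "proj_pt (M_point d1) \<noteq> proj_pt (M_point d2)"
    using inj_proj_M_point by (auto dest: injD)
  then have "line_Q (M_point d1) = M"
    using lines_eq_if_two_common_points[OF line_Q_M_point_in_lines line_of_in_lines[OF cross3_R1_R2]]
      proj_pt_in_line_Q[OF M_point_nonzero] proj_M_point_in_M M_point_nonzero eq by metis
  then show False using Q_in_line_Q Q_notin_M by metis
qed

lemma lines_through_Q: "{l \<in> lines. Q \<in> l} = range (\<lambda>d. line_Q (M_point d))"
proof (intro equalityI subsetI)
  fix l assume l: "l \<in> {l \<in> lines. Q \<in> l}"
  then obtain n where n: "n \<noteq> (0, 0, 0)" "l = line_of n" by (blast elim: linesE)
  have "l \<noteq> M" using l Q_notin_M by blast
  then obtain P where P: "P \<in> l" "P \<in> M"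
    using lines_intersect[OF n(1) cross3_R1_R2] n(2) by metis
  then obtain d where "P = proj_pt (M_point d)" unfolding M_eq_range by blast
  with P(1) have "l = line_Q (M_point d)"
    using l by (intro line_through_Q_eq_line_Q) (auto simp: proj_M_point_neq_Q M_point_nonzero)
  then show "l \<in> range (\<lambda>d. line_Q (M_point d))" by blast
qed (use line_Q_M_point_in_lines Q_in_line_Q in blast)

lemma curve_pts_eq_UN: "X = (\<Union>d. line_Q (M_point d) \<inter> X)"
proof (intro equalityI subsetI)
  fix T assume T: "T \<in> X"
  then obtain w where w: "w \<noteq> (0, 0, 0)" "T = proj_pt w"
    unfolding curve_pts_def by (blast elim: P2E)
  have "T \<noteq> Q" using T Q_notin_X by blast
  then have "line_Q w \<in> {l \<in> lines. Q \<in> l}"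
    using line_Q_in_lines cross3_u_nonzero w Q_in_line_Q by blast
  then obtain d where "line_Q w = line_Q (M_point d)" using lines_through_Q by blast
  then show "T \<in> (\<Union>d. line_Q (M_point d) \<inter> X)"
    using T proj_pt_in_line_Q[OF w(1)] w(2) by auto
qed blast

lemma line_Q_M_point_disjoint:
  assumes "d1 \<noteq> d2"
  shows "line_Q (M_point d1) \<inter> line_Q (M_point d2) \<inter> X = {}"
proof (rule ccontr)
  assume "line_Q (M_point d1) \<inter> line_Q (M_point d2) \<inter> X \<noteq> {}"
  then obtain T where T: "T \<in> line_Q (M_point d1)" "T \<in> line_Q (M_point d2)" "T \<in> X" by blast
  then obtain w where w: "w \<noteq> (0, 0, 0)" "T = proj_pt w"
    unfolding curve_pts_def by (blast elim: P2E)
  have "Q \<noteq> proj_pt w" using T(3) w(2) Q_notin_X by auto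
  then have "line_Q (M_point d1) = line_Q (M_point d2)"
    using lines_eq_if_two_common_points[OF line_Q_M_point_in_lines line_Q_M_point_in_lines
        Q_in_line_Q Q_in_line_Q _ _ u_nonzero w(1)] T w(2) by blast
  then show False using inj_line_Q_M_point assms by (auto dest: injD)
qed

lemma sum_nroots_M_point: "(\<Sum>d\<in>UNIV. nroots (M_point d)) = card X"
proof -
  have "card X = (\<Sum>d\<in>UNIV. card (line_Q (M_point d) \<inter> X))"
    by (subst curve_pts_eq_UN, rule card_UN_disjoint)
      (use line_Q_M_point_disjoint in \<open>auto simp: Int_ac\<close>)
  then show ?thesis using card_line_Q_inter_X[OF cross3_u_M_point] by simp
qed

lemma psi_Q_eq_card_full: "psi F N Q = card full"
proof -
  have "{l \<in> lines. Q \<in> l \<and> card (l \<inter> X) = N} = {l \<in> {l \<in> lines. Q \<in> l}. card (l \<inter> X) = N}"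
    by blast
  also have "\<dots> = (\<lambda>d. line_Q (M_point d)) ` full"
    unfolding lines_through_Q full_def by (auto simp: card_line_Q_inter_X[OF cross3_u_M_point])
  finally show ?thesis
    unfolding psi_def using card_image[OF inj_on_subset[OF inj_line_Q_M_point]] by simp
qed

lemma line_poly_combination: "line_poly (add3 (smult3 a R1) (smult3 b R2)) = polyX G N a b"
proof (rule poly_eqI_degree[where A = UNIV])
  show "poly (line_poly (add3 (smult3 a R1) (smult3 b R2))) s = poly (polyX G N a b) s" for s
    unfolding poly_polyX[OF homogeneous3_linear_subst[OF homogeneous]]
      eval3_linear_subst[OF homogeneous] poly_line_poly
    by (cases u; cases R1; cases R2) (simp add: algebra_simps)
  show "degree (polyX G N a b) < card (UNIV :: 'a set)"
    using degree_polyX[of G N a b] card_field by simp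
  show "degree (line_poly (add3 (smult3 a R1) (smult3 b R2))) < card (UNIV :: 'a set)"
    using degree_line_poly card_field by (simp add: le_imp_less_Suc)
qed

lemma coeff_line_poly_M_point:
  assumes "P1_coords d = (a, b)" "m \<le> N"
  shows "coeff (line_poly (M_point d)) m = coeffX G N m a b"
  using assms line_poly_combination[of a b] by (simp add: M_point_def coeff_polyX)

lemma coeff_normal_poly:
  "coeff (monom c N - [:c:]) m = (if m = N then c else if m = 0 then - c else 0)"
  using N_ge_1 by (cases m) auto

lemma coeffX_dehom_N_minus_1: "coeffX_dehom G N (N - 1) = 0"
proof -
  note hom = homogeneous3_linear_subst[OF homogeneous, of u R1 R2]
  have R2_eq: "M_point (Some 0) = R2" by (simp add: M_point_Some)
  have line_poly_R: "line_poly R1 = monom c N - [:c:]" "line_poly R2 = monom c N - [:c:]"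
    using line_poly_eq_if_nonroot_0 R1_normal R2_normal by blast+
  have "coeff (coeffX_dehom G N (N - 1)) 1 = coeff (line_poly R1) (N - 1)"
    using coeffX_1_0[OF hom, of "N - 1"] coeff_line_poly_M_point[of None 1 0 "N - 1"] N_ge_2
    by (simp add: M_point_None)
  moreover have "coeff (coeffX_dehom G N (N - 1)) 0 = coeff (line_poly R2) (N - 1)"
    using coeffX_0_1[OF hom, of "N - 1"] coeff_line_poly_M_point[of "Some 0" 0 1 "N - 1"] N_ge_2
    by (simp add: R2_eq)
  moreover have "degree (coeffX_dehom G N (N - 1)) \<le> 1"
    using degree_coeffX_dehom[OF hom, of "N - 1"] N_ge_2 by simp
  ultimately have c1: "coeff (coeffX_dehom G N (N - 1)) 1 = 0"
    and c0: "coeff (coeffX_dehom G N (N - 1)) 0 = 0"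
    and deg: "degree (coeffX_dehom G N (N - 1)) \<le> 1"
    using N_ge_2 unfolding line_poly_R coeff_normal_poly by auto
  show ?thesis
  proof (rule poly_eqI)
    fix j
    show "coeff (coeffX_dehom G N (N - 1)) j = coeff 0 j"
      using c0 c1 deg coeff_eq_0[of "coeffX_dehom G N (N - 1)" j] by (cases j; cases "j - 1") auto
  qed
qed


lemma coeff_line_poly_M_point_N_minus_1: "coeff (line_poly (M_point d)) (N - 1) = 0"
proof -
  obtain a b where ab: "P1_coords d = (a, b)" by (cases "P1_coords d")
  then show ?thesis
    using coeff_line_poly_M_point[OF ab, of "N - 1"] coeffX_dehom_N_minus_1
      coeffX_eq_0_if_dehom_eq_0[OF homogeneous3_linear_subst[OF homogeneous]]
    by simp
qed

lemma full_M_point_nonroot_0: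
  assumes "d \<in> full"
  shows "poly (line_poly (M_point d)) s = 0 \<longleftrightarrow> s \<noteq> 0"
proof -
  obtain s0 where s0: "\<And>s. poly (line_poly (M_point d)) s = 0 \<longleftrightarrow> s \<noteq> s0"
    using full_line_unique_nonroot assms unfolding full_def by blast
  moreover have "s0 = 0"
    using unique_nonroot_eq_0[OF N_ge_2 s0 coeff_line_poly_M_point_N_minus_1] .
  ultimately show ?thesis by simp
qed

lemma line_poly_full_M_point: "d \<in> full \<Longrightarrow> line_poly (M_point d) = monom c N - [:c:]"
  by (rule line_poly_eq_if_nonroot_0) (rule full_M_point_nonroot_0)

lemma None_in_full: "None \<in> full"
proof -
  have "{s. poly (line_poly R1) s = 0} = UNIV - {0}" using R1_normal by auto
  then have "nroots R1 = N" unfolding nroots_def using card_field by (simp add: card_Diff_subset)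
  then show ?thesis unfolding full_def by (simp add: M_point_None)
qed

lemma card_full_Some: "card {t. Some t \<in> full} = card full - 1"
proof -
  have "d \<in> full \<longleftrightarrow> d \<in> insert None (Some ` {t. Some t \<in> full})" for d
    using None_in_full by (cases d) auto
  then have "full = insert None (Some ` {t. Some t \<in> full})" by blast
  then have "card full = Suc (card (Some ` {t. Some t \<in> full}))"
    by (metis card_insert_disjoint finite None_notin_image_Some)
  then show ?thesis by (simp add: card_image)
qed

text \<open>The binary form \<open>coeffX G N m\<close> has degree \<open>N - m < card full\<close> but vanishes at every point of
  \<open>full\<close>, since all full lines have the restriction \<open>c s\<^sup>N - c\<close>.\<close>

lemma coeffX_dehom_eq_0:
  assumes "N - card full < m" "m < N"
  shows "coeffX_dehom G N m = 0"
proof (rule ccontr)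
  note hom = homogeneous3_linear_subst[OF homogeneous, of u R1 R2]
  assume nonzero: "coeffX_dehom G N m \<noteq> 0"
  have vanish: "coeffX G N m a b = 0" if "d \<in> full" "P1_coords d = (a, b)" for d a b
  proof -
    have "coeff (line_poly (M_point d)) m = 0"
      unfolding line_poly_full_M_point[OF that(1)] coeff_normal_poly using assms by simp
    then show ?thesis using coeff_line_poly_M_point[OF that(2)] assms(2) by simp
  qed
  have "coeff (coeffX_dehom G N m) (N - m) = 0"
    using vanish[OF None_in_full] coeffX_1_0[OF hom, of m] assms(2) by simp
  then have "degree (coeffX_dehom G N m) \<noteq> N - m" using nonzero leading_coeff_0_iff by metis
  then have "degree (coeffX_dehom G N m) < N - m"
    using degree_coeffX_dehom[OF hom, of m] by linarith
  have "{t. Some t \<in> full} \<subseteq> {t. poly (coeffX_dehom G N m) t = 0}"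
    using vanish poly_coeffX_dehom[OF hom] by auto
  then have "card full - 1 \<le> card {t. poly (coeffX_dehom G N m) t = 0}"
    unfolding card_full_Some[symmetric] by (rule card_mono[rotated]) simp
  also have "\<dots> \<le> degree (coeffX_dehom G N m)"
    by (rule card_poly_roots_bound[OF nonzero])
  finally have "card full - 1 \<le> degree (coeffX_dehom G N m)" .
  with \<open>degree (coeffX_dehom G N m) < N - m\<close> show False using assms by linarith
qed

lemma line_poly_M_point_decomp:
  obtains S where "degree S \<le> N - card full" "line_poly (M_point d) = monom c N + S"
proof -
  obtain a b where ab: "P1_coords d = (a, b)" by (cases "P1_coords d")
  define S where "S = (\<Sum>m\<le>N - card full. monom (coeffX G N m a b) m)"
  have "degree S \<le> N - card full"
    unfolding S_def by (intro degree_sum_le) (auto intro: order.trans[OF degree_monom_le])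
  have "card full \<ge> 1" using None_in_full by (auto simp: Suc_le_eq card_gt_0_iff)
  have "coeff (line_poly (M_point d)) m = coeff (monom c N + S) m" for m
  proof -
    have coeff_S: "coeff S m = (if m \<le> N - card full then coeffX G N m a b else 0)"
      unfolding S_def by (simp add: coeff_sum)
    consider "m = N" | "N - card full < m" "m < N" | "m \<le> N - card full" | "N < m" by linarith
    then show ?thesis
    proof cases
      case 1
      then show ?thesis using coeff_line_poly_N coeff_S \<open>card full \<ge> 1\<close> N_ge_1 by simp
    next
      case 2
      then show ?thesis using coeff_line_poly_M_point[OF ab] coeff_S coeffX_dehom_eq_0
          coeffX_eq_0_if_dehom_eq_0[OF homogeneous3_linear_subst[OF homogeneous]] by simp
    next
      case 3
      then show ?thesis
        using coeff_line_poly_M_point[OF ab] coeff_S \<open>card full \<ge> 1\<close> N_ge_1 by simp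
    next
      case 4
      then show ?thesis
        using coeff_eq_0[of "line_poly (M_point d)" m] degree_line_poly[of "M_point d"] coeff_S
        by simp
    qed
  qed
  then have "line_poly (M_point d) = monom c N + S" by (rule poly_eqI)
  with \<open>degree S \<le> N - card full\<close> show ?thesis by (rule that)
qed

lemma nroots_nonfull_le:
  assumes "d \<notin> full"
  shows "nroots (M_point d) \<le> Suc (N - card full)"
proof -
  obtain S where deg: "degree S \<le> N - card full" and eq: "line_poly (M_point d) = monom c N + S"
    by (rule line_poly_M_point_decomp)
  have agree: "poly (line_poly (M_point d)) s = poly ([:c:] + S) s" if "s \<noteq> 0" for s
    unfolding eq using power_N_eq_1[OF that] by (simp add: poly_monom)
  have "[:c:] + S \<noteq> 0"
  proof
    assume "[:c:] + S = 0"
    then have "UNIV - {0} \<subseteq> {s. poly (line_poly (M_point d)) s = 0}" using agree by auto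
    then have "card (UNIV - {0::'a}) \<le> nroots (M_point d)"
      unfolding nroots_def by (rule card_mono[rotated]) simp
    then have "N \<le> nroots (M_point d)" using card_field by (simp add: card_Diff_subset)
    then show False using nroots_le assms unfolding full_def by (simp add: le_antisym)
  qed
  have "{s. poly (line_poly (M_point d)) s = 0} \<subseteq> insert 0 {s. poly ([:c:] + S) s = 0}"
    using agree by auto
  then have "nroots (M_point d) \<le> card (insert 0 {s. poly ([:c:] + S) s = 0})"
    unfolding nroots_def by (rule card_mono[rotated]) simp
  also have "\<dots> \<le> Suc (degree ([:c:] + S))"
    using card_poly_roots_bound[OF \<open>[:c:] + S \<noteq> 0\<close>] by (simp add: card_insert_if)
  also have "\<dots> \<le> Suc (N - card full)"
    using deg by (simp add: degree_add_le)
  finally show ?thesis .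
qed

lemma card_option_UNIV: "CARD('a option) = N + 2"
  using card_field by (simp add: card_UNIV_option)

lemma sum_nroots_split:
  "card X = card full * N + (\<Sum>d\<in>- full. nroots (M_point d))"
proof -
  have "card X = (\<Sum>d\<in>- full. nroots (M_point d)) + (\<Sum>d\<in>full. nroots (M_point d))"
    unfolding sum_nroots_M_point[symmetric] Compl_eq_Diff_UNIV
    by (rule sum.subset_diff) simp_all
  then show ?thesis unfolding full_def by simp
qed

lemma card_full_le:
  assumes "card X = N\<^sup>2"
  shows "card full \<le> N"
proof -
  have "card full * N \<le> N * N" using sum_nroots_split assms by (simp add: power2_eq_square)
  then show ?thesis using N_ge_1 by simp
qed

lemma card_full_eq_N:
  assumes "card X = N\<^sup>2" "N \<ge> 7" "card full \<ge> 4"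
  shows "card full = N"
proof (rule ccontr)
  let ?r = "card full"
  assume "?r \<noteq> N"
  with card_full_le[OF assms(1)] have "?r < N" by simp
  have "(\<Sum>d\<in>- full. nroots (M_point d)) \<le> card (- full) * Suc (N - ?r)"
    using sum_mono[of "- full" "\<lambda>d. nroots (M_point d)" "\<lambda>_. Suc (N - ?r)"] nroots_nonfull_le
    by simp
  moreover have "card (- full) = N + 2 - ?r"
    using card_option_UNIV by (simp add: Compl_eq_Diff_UNIV card_Diff_subset)
  ultimately have "N * N \<le> ?r * N + (N + 2 - ?r) * (N + 1 - ?r)"
    using sum_nroots_split assms(1) \<open>?r < N\<close> by (simp add: power2_eq_square Suc_diff_le)
  moreover have "int (N + 2 - ?r) = int N + 2 - int ?r" "int (N + 1 - ?r) = int N + 1 - int ?r"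
    using \<open>?r < N\<close> by simp_all
  ultimately have "int N * int N \<le> int ?r * int N + (int N + 2 - int ?r) * (int N + 1 - int ?r)"
    by (metis of_nat_add of_nat_le_iff of_nat_mult)
  moreover have "(int N - int ?r - 1) * (int ?r - 4) \<ge> 0"
    using \<open>?r < N\<close> assms(3) by simp
  ultimately show False using assms(2) by (simp add: algebra_simps)
qed

lemma nroots_nonfull_eq_0:
  assumes "card X = N\<^sup>2" "card full = N" "d \<notin> full"
  shows "nroots (M_point d) = 0"
proof -
  have "(\<Sum>d\<in>- full. nroots (M_point d)) = 0"
    using sum_nroots_split assms(1,2) by (simp add: power2_eq_square)
  then show ?thesis using assms(3) by simp
qed

lemma eval_vec_M_point_nonzero:
  assumes "d \<in> full \<or> nroots (M_point d) = 0"
  shows "eval_vec F (M_point d) \<noteq> 0"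
proof -
  have "poly (line_poly (M_point d)) 0 \<noteq> 0"
    using assms full_M_point_nonroot_0[of d 0] line_poly_nonzero
    by (auto simp: nroots_def poly_roots_finite)
  then show ?thesis using poly_line_poly[of "M_point d" 0] by simp
qed

lemma M_inter_X_empty:
  assumes "card X = N\<^sup>2" "card full = N"
  shows "M \<inter> X = {}"
  unfolding M_eq_range
  using proj_pt_in_curve_pts_iff[OF homogeneous M_point_nonzero] eval_vec_M_point_nonzero
    nroots_nonfull_eq_0[OF assms] by blast

text \<open>A line \<open>l\<close> avoiding \<open>X\<close> and \<open>Q\<close> meets the full line through \<open>M_point e\<close> in a point
  \<open>[s u + M_point e]\<close> off the curve, which forces \<open>s = 0\<close>.\<close>

lemma full_line_meets_line_in_M_point:
  assumes "e \<in> full" "l \<in> lines" "l \<inter> X = {}" "Q \<notin> l"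
  shows "proj_pt (M_point e) \<in> l"
proof -
  obtain n where n: "n \<noteq> (0, 0, 0)" "l = line_of n" using assms(2) by (rule linesE)
  have "l \<noteq> line_Q (M_point e)" using Q_in_line_Q assms(4) by blast
  then obtain T where T: "T \<in> l" "T \<in> line_Q (M_point e)"
    using lines_intersect[OF n(1) cross3_u_M_point] n(2) unfolding line_Q_def by metis
  then have "T \<noteq> Q" using assms(4) by blast
  then obtain s where s: "T = proj_pt (line_point s u (M_point e))"
    using T(2) unfolding line_Q_def line_of_cross3_eq[OF cross3_u_M_point] by blast
  have "T \<notin> X" using T(1) assms(3) by blast
  then have "poly (line_poly (M_point e)) s \<noteq> 0"
    unfolding s poly_line_poly
    using proj_pt_in_curve_pts_iff[OF homogeneous line_point_nonzero[OF cross3_u_M_point]] by blast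
  then have "s = 0" using full_M_point_nonroot_0[OF assms(1)] by blast
  then show ?thesis using T(1) s by simp
qed

lemma line_avoiding_X_and_Q_eq_M:
  assumes "card full \<ge> 2" "l \<in> lines" "l \<inter> X = {}" "Q \<notin> l"
  shows "l = M"
proof -
  have "card {t. Some t \<in> full} \<noteq> 0" using assms(1) card_full_Some by simp
  then obtain t where "Some t \<in> full" by (metis Collect_empty_eq card.empty)
  have "proj_pt (M_point None) \<noteq> proj_pt (M_point (Some t))"
    using inj_proj_M_point by (metis injD option.distinct(1))
  then show ?thesis
    using lines_eq_if_two_common_points[OF assms(2) line_of_in_lines[OF cross3_R1_R2]]
      full_line_meets_line_in_M_point[OF _ assms(2-4)] None_in_full \<open>Some t \<in> full\<close>
      proj_M_point_in_M M_point_nonzero by blast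
qed

lemma lines_avoiding_X:
  assumes "card X = N\<^sup>2" "card full = N"
  shows "{l \<in> lines. l \<inter> X = {}} = insert M ((\<lambda>d. line_Q (M_point d)) ` (- full))"
proof (intro equalityI subsetI)
  fix l assume l: "l \<in> {l \<in> lines. l \<inter> X = {}}"
  show "l \<in> insert M ((\<lambda>d. line_Q (M_point d)) ` (- full))"
  proof (cases "Q \<in> l")
    case True
    then obtain d where d: "l = line_Q (M_point d)" using l lines_through_Q by blast
    then have "nroots (M_point d) = 0"
      using l card_line_Q_inter_X[OF cross3_u_M_point, of d, symmetric] by simp
    then have "d \<notin> full" using N_ge_1 by (simp add: full_def)
    then show ?thesis using d by blast
  next
    case False
    then show ?thesis using line_avoiding_X_and_Q_eq_M l assms(2) N_ge_2 by auto
  qed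
next
  fix l assume "l \<in> insert M ((\<lambda>d. line_Q (M_point d)) ` (- full))"
  moreover have "line_Q (M_point d) \<inter> X = {}" if "d \<notin> full" for d
    using nroots_nonfull_eq_0[OF assms that] card_line_Q_inter_X[OF cross3_u_M_point, of d]
    by (simp add: card_eq_0_iff)
  ultimately show "l \<in> {l \<in> lines. l \<inter> X = {}}"
    using M_inter_X_empty[OF assms] line_of_in_lines[OF cross3_R1_R2] line_Q_M_point_in_lines
    by blast
qed

lemma a0_eq_3:
  assumes "card X = N\<^sup>2" "card full = N"
  shows "a0 F = 3"
proof -
  have "M \<notin> (\<lambda>d. line_Q (M_point d)) ` (- full)" using Q_in_line_Q Q_notin_M by blast
  moreover have "card (- full) = 2"
    using card_option_UNIV assms(2) by (simp add: Compl_eq_Diff_UNIV card_Diff_subset)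
  ultimately show ?thesis
    unfolding a0_def lines_avoiding_X[OF assms]
    using card_image[OF inj_on_subset[OF inj_line_Q_M_point]] by simp
qed

end

context off_curve_point
begin

lemma obtain_full_line_frame:
  assumes "N \<ge> 2"
    and l1: "l1 \<in> lines" "Q \<in> l1" "card (l1 \<inter> X) = N"
    and l2: "l2 \<in> lines" "Q \<in> l2" "card (l2 \<inter> X) = N"
    and "l1 \<noteq> l2"
  obtains R1 R2 where "full_line_frame F N u R1 R2"
proof -
  obtain R1 where R1: "line_Q R1 = l1" "\<And>s. poly (line_poly R1) s = 0 \<longleftrightarrow> s \<noteq> 0"
    using exists_normalized_point[OF l1] by metis
  obtain R2 where R2: "cross3 u R2 \<noteq> (0, 0, 0)" "line_Q R2 = l2"
    "\<And>s. poly (line_poly R2) s = 0 \<longleftrightarrow> s \<noteq> 0"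
    using exists_normalized_point[OF l2] by metis
  have "dot3 (cross3 R1 R2) u \<noteq> 0"
  proof
    assume "dot3 (cross3 R1 R2) u = 0"
    then have "dot3 (cross3 u R1) R2 = 0" by (simp add: dot3_cross3_cyclic)
    have R2_nonzero: "R2 \<noteq> (0, 0, 0)" using cross3_nonzero_D(2)[OF R2(1)] .
    have "proj_pt R2 \<in> l1"
      unfolding R1(1)[symmetric] line_Q_def proj_pt_in_line_of_iff[OF R2_nonzero] by fact
    moreover have "proj_pt R2 \<in> l2" using proj_pt_in_line_Q[OF R2_nonzero] R2(2) by simp
    moreover have "Q \<noteq> proj_pt R2"
      using proj_pt_eq_iff_cross3[OF u_nonzero R2_nonzero] R2(1) by blast
    ultimately have "l1 = l2"
      using lines_eq_if_two_common_points[OF l1(1) l2(1) l1(2) l2(2)] u_nonzero R2_nonzero by blast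
    then show False using \<open>l1 \<noteq> l2\<close> by contradiction
  qed
  then have "full_line_frame F N u R1 R2"
    using assms(1) R1(2) R2(3) by unfold_locales blast+
  then show ?thesis by (rule that)
qed

lemma psi_ge_4_imp:
  assumes "N \<ge> 7" "card X = N\<^sup>2" "psi F N Q \<ge> 4"
  shows "psi F N Q = N \<and> a0 F = 3"
proof -
  let ?full_lines = "{l \<in> lines. Q \<in> l \<and> card (l \<inter> X) = N}"
  have "\<not> card ?full_lines \<le> Suc 0" using assms(3) unfolding psi_def by simp
  then obtain l1 l2 where "l1 \<in> ?full_lines" "l2 \<in> ?full_lines" "l1 \<noteq> l2"
    using card_le_Suc0_iff_eq[of ?full_lines] by auto
  moreover have "N \<ge> 2" using assms(1) by simp
  ultimately obtain R1 R2 where "full_line_frame F N u R1 R2"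
    by (elim obtain_full_line_frame) auto
  then interpret full_line_frame F N u R1 R2 .
  have "card full = N" using card_full_eq_N assms psi_Q_eq_card_full by simp
  then show ?thesis using psi_Q_eq_card_full a0_eq_3 assms(2) by simp
qed

end

theorem corollary3p11:
  fixes F :: "'a::{finite, field} poly poly poly" and q :: nat
  assumes "CARD('a) = q"
    and "q \<ge> 8"
    and "F \<noteq> 0"
    and "homogeneous3 F (q - 1)"
    and "no_linear_components F"
    and "card (curve_pts F) = (q - 1)^2"
    and "Q \<in> Zset F"
    and "psi F (q - 1) Q \<ge> 4"
  shows "psi F (q - 1) Q = q - 1 \<and> a0 F = 3"
proof -
  obtain u where u: "u \<noteq> (0, 0, 0)" "Q = proj_pt u"
    using assms(7) unfolding Zset_def by (blast elim: P2E)
  have "eval_vec F u \<noteq> 0"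
    using proj_pt_in_curve_pts_iff[OF assms(4) u(1)] assms(7) u(2) by (simp add: Zset_def)
  then interpret off_curve_point F "q - 1" u
    using assms(1,2,4) u(1) by unfold_locales auto
  show ?thesis using psi_ge_4_imp assms(2,6,8) u(2) by simp
qed

end
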